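(* Let $A$ be the semi-local highest-score matrix of strings $x$ (length $m$) and $y$ (length $n$), and let $w, r$ be positive integers. To represent the $(w,r)$-restricted highest-score matrix $A^{w,r}$ implicitly, it suffices to store only those critical points $(\hat{\imath}, \hat{\jmath})$ of the unrestricted matrix $A$ for which $\hat{\jmath} - \hat{\imath} < w$; that is, every defined entry $A^{w,r}(i,j)$ is determined by this set of critical points.
   Context: Notation: $[i:j] = \{i, i+1, \ldots, j\}$ and $\langle i:j\rangle = \{i+\tfrac12, i+\tfrac32, \ldots, j-\tfrac12\}$ (odd half-integers); odd half-integer variables are written with a hat. The alignment dag of $x$ and $y$ has vertices $v_{k,l}$, $k\in[0:m]$, $l\in[0:n]$, horizontal edges $v_{k,l-1}\to v_{k,l}$ and vertical edges $v_{k-1,l}\to v_{k,l}$ of score $0$, and diagonal edges $v_{k-1,l-1}\to v_{k,l}$ of score $1$ present exactly when $x_k = y_l$. The (semi-local) highest-score matrix $A$ has as entry $A(i,j)$ the maximum score of a path in this dag from the top boundary at column $i$ to the bottom boundary at column $j$ (i.e. the LLCS of $x$ and the substring of $y$ between columns $i$ and $j$), in the standard semi-local framework of Tiskin. A critical point of $A$ is a pair of odd half-integers $(\hat{\imath}, \hat{\jmath})$ such that $A(\hat{\imath}+\tfrac12,\hat{\jmath}-\tfrac12) + 1 = A(\hat{\imath}-\tfrac12,\hat{\jmath}-\tfrac12) = A(\hat{\imath}+\tfrac12,\hat{\jmath}+\tfrac12) = A(\hat{\imath}-\tfrac12,\hat{\jmath}+\tfrac12)$. Known fact (Tiskin): the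 0/1 matrix $D_A$ marking the critical points is a permutation matrix, and $A(i,j) = j - i - D_A^\Sigma(i,j)$, where $D_A^\Sigma(i,j)$ is the number of critical points $(\hat{\imath},\hat{\jmath})$ with $\hat{\imath} > i$ and $\hat{\jmath} < j$. The $(w,r)$-restricted highest-score matrix $A^{w,r}$ is defined by $A^{w,r}(i,j) = A(i,j)$ if $j - i \le w$ and $i \bmod r = j \bmod r = 0$, and $A^{w,r}(i,j)$ undefined otherwise. *)

theory Defs
  imports Main "HOL.Real"
begin

text \<open>The alignment dag is extended (as in Tiskin) by m wildcard columns on each side
  of y: columns range over [-m : n+m]; in a column l with l \<le> 0 or l > n the
  character of the padded y is a wildcard matching every character of x.\<close>

definition matches :: "'a list \<Rightarrow> 'a list \<Rightarrow> nat \<Rightarrow> int \<Rightarrow> bool" where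
  "matches x y k l \<longleftrightarrow> (l \<le> 0 \<or> l > int (length y) \<or> x ! (k - 1) = y ! (nat l - 1))"

inductive dpath :: "'a list \<Rightarrow> 'a list \<Rightarrow> nat \<times> int \<Rightarrow> nat \<times> int \<Rightarrow> nat \<Rightarrow> bool"
  for x y where
  start: "dpath x y v v 0"
| hor: "dpath x y v (k, l) s \<Longrightarrow> dpath x y v (k, l + 1) s"
| ver: "dpath x y v (k, l) s \<Longrightarrow> dpath x y v (Suc k, l) s"
| dia: "dpath x y v (k, l) s \<Longrightarrow> matches x y (Suc k) (l + 1) \<Longrightarrow>
        dpath x y v (Suc k, l + 1) (Suc s)"

text \<open>Semi-local highest-score matrix A(i,j), i \<in> [-m:n], j \<in> [0:m+n];
  A(i,j) = j - i for i > j (Tiskin's convention).\<close>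
definition hsm :: "'a list \<Rightarrow> 'a list \<Rightarrow> int \<Rightarrow> int \<Rightarrow> int" where
  "hsm x y i j = (if j < i then j - i
     else int (Max {s. dpath x y (0, i) (length x, j) s}))"

text \<open>Critical points of A, as pairs of odd half-integers (\<imath>, \<jmath>) with
  \<imath> \<in> \<langle>-m:n\<rangle>, \<jmath> \<in> \<langle>0:m+n\<rangle>.\<close>
definition crit :: "'a list \<Rightarrow> 'a list \<Rightarrow> (real \<times> real) set" where
  "crit x y = {(a + 1/2, b + 1/2) | a b :: int.
      - int (length x) \<le> a \<and> a < int (length y) \<and>
      0 \<le> b \<and> b < int (length x) + int (length y) \<and>
      hsm x y (a + 1) b + 1 = hsm x y a b \<and>
      hsm x y a b = hsm x y (a + 1) (b + 1) \<and>
      hsm x y (a + 1) (b + 1) = hsm x y a (b + 1)}"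

definition hsm_restr :: "'a list \<Rightarrow> 'a list \<Rightarrow> int \<Rightarrow> int \<Rightarrow> int \<Rightarrow> int \<Rightarrow> int option" where
  "hsm_restr x y w r i j =
     (if - int (length x) \<le> i \<and> i \<le> int (length y) \<and>
         0 \<le> j \<and> j \<le> int (length x) + int (length y) \<and>
         j - i \<le> w \<and> i mod r = 0 \<and> j mod r = 0
      then Some (hsm x y i j) else None)"

end

theory Submission
  imports Defs
begin

text \<open>The highest-score matrix satisfies the local recurrence
  \<open>A(i, j+1) = A(i, j) + A(i+1, j+1) - A(i+1, j) - [(i+1/2, j+1/2) is critical]\<close>,
  which is the unit-Monge property of the matrix: in the dynamic program for the
  scores of paths from the top columns \<open>i\<close> and \<open>i+1\<close>, their difference is 0 or 1 and
  moves monotonically along the table.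
  By induction on \<open>j - i\<close>, every entry \<open>A(i, j)\<close> with \<open>j - i \<le> w\<close> is therefore determined by
  entries of smaller width and by the critical points with \<open>\<jmath> - \<imath> < w\<close>.
  The base cases \<open>i = j\<close>, \<open>i = n\<close> and \<open>j = 0\<close> involve no columns of \<open>y\<close> itself, only
  wildcard columns, so they depend on nothing but the lengths of the strings.\<close>

function max_score :: "'a list \<Rightarrow> 'a list \<Rightarrow> int \<Rightarrow> nat \<Rightarrow> int \<Rightarrow> int" where
  "max_score x y i k l = (if k = 0 \<or> l \<le> i then 0 else
     max (max_score x y i (k - 1) l)
       (max (max_score x y i k (l - 1))
          (max_score x y i (k - 1) (l - 1) + of_bool (matches x y k l))))"
  by pat_completeness auto
termination by (relation "measure (\<lambda>(x, y, i, k, l). k + nat (l - i))") auto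

declare max_score.simps [simp del]

lemma max_score_trivial: "k = 0 \<or> l \<le> i \<Longrightarrow> max_score x y i k l = 0"
  by (simp add: max_score.simps[of x y i k l])

lemma max_score_Suc:
  "i \<le> l \<Longrightarrow> max_score x y i (Suc k) (l + 1) =
     max (max_score x y i k (l + 1))
       (max (max_score x y i (Suc k) l)
          (max_score x y i k l + of_bool (matches x y (Suc k) (l + 1))))"
  by (simp add: max_score.simps[of x y i "Suc k" "l + 1"])

lemma max_score_nonneg: "0 \<le> max_score x y i k l"
proof (induction x y i k l rule: max_score.induct)
  case (1 x y i k l)
  then show ?case by (simp add: max_score.simps[of x y i k l] le_max_iff_disj)
qed

lemma max_score_mono_col: "max_score x y i k l \<le> max_score x y i k (l + 1)"
proof (cases "k = 0 \<or> l + 1 \<le> i")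
  case True
  then show ?thesis by (auto simp: max_score_trivial)
next
  case False
  then obtain k' where "k = Suc k'" "i \<le> l"
    by (cases k) auto
  then show ?thesis by (simp add: max_score_Suc)
qed

lemma max_score_mono_row: "max_score x y i k l \<le> max_score x y i (Suc k) l"
proof (cases "l \<le> i")
  case True
  then show ?thesis by (simp add: max_score_trivial)
next
  case False
  then show ?thesis using max_score_Suc[of i "l - 1" x y k] by simp
qed

lemma max_score_col_step: "max_score x y i k (l + 1) \<le> max_score x y i k l + 1"
proof (induction k)
  case 0
  then show ?case by (simp add: max_score_trivial)
next
  case (Suc k)
  show ?case
  proof (cases "i \<le> l")
    case True
    then show ?thesis
      using Suc max_score_mono_row[of x y i k l] by (simp add: max_score_Suc)
  next
    case False
    then show ?thesis by (simp add: max_score_trivial)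
  qed
qed

lemma max_score_row_step: "max_score x y i (Suc k) l \<le> max_score x y i k l + 1"
proof (cases "i \<le> l")
  case True
  then show ?thesis
  proof (induction l rule: int_ge_induct)
    case base
    then show ?case by (simp add: max_score_trivial)
  next
    case (step l)
    then show ?case
      using max_score_mono_col[of x y i k l] by (simp add: max_score_Suc)
  qed
next
  case False
  then show ?thesis by (simp add: max_score_trivial)
qed

lemma dpath_score_le_max_score:
  "dpath x y (0, i) u s \<Longrightarrow> i \<le> snd u \<and> int s \<le> max_score x y i (fst u) (snd u)"
proof (induction "(0::nat, i)" u s rule: dpath.induct)
  case start
  then show ?case by (simp add: max_score_trivial)
next
  case (hor k l s)
  then show ?case using max_score_mono_col[of x y i k l] by simp
next
  case (ver k l s)
  then show ?case using max_score_mono_row[of x y i k l] by simp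
next
  case (dia k l s)
  then show ?case by (simp add: max_score_Suc le_max_iff_disj)
qed

lemma dpath_hor_iter: "dpath x y v (k, l) s \<Longrightarrow> dpath x y v (k, l + int n) s"
proof (induction n)
  case (Suc n)
  then have "dpath x y v (k, l + int n + 1) s" by (intro dpath.hor)
  then show ?case by (simp add: ac_simps)
qed simp

lemma dpath_ver_iter: "dpath x y v (k, l) s \<Longrightarrow> dpath x y v (k + n, l) s"
  by (induction n) (auto intro: dpath.ver)

lemma dpath_max_score: "i \<le> l \<Longrightarrow> dpath x y (0, i) (k, l) (nat (max_score x y i k l))"
proof (induction x y i k l rule: max_score.induct)
  case (1 x y i k l)
  show ?case
  proof (cases "k = 0 \<or> l = i")
    case True
    have "dpath x y (0, i) (0, i + int (nat (l - i))) 0"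
      by (rule dpath_hor_iter) (rule dpath.start)
    moreover have "dpath x y (0, i) (0 + k, i) 0"
      by (rule dpath_ver_iter) (rule dpath.start)
    ultimately show ?thesis
      using True "1.prems" by (auto simp: max_score_trivial)
  next
    case False
    with "1.prems" obtain k' where k: "k = Suc k'" and "i < l"
      by (cases k) auto
    let ?up = "max_score x y i k' l" and ?left = "max_score x y i k (l - 1)"
      and ?diag = "max_score x y i k' (l - 1)"
    have up: "dpath x y (0, i) (k, l) (nat ?up)"
      using dpath.ver[OF "1.IH"(1)] False \<open>i < l\<close> k by simp
    have left: "dpath x y (0, i) (k, l) (nat ?left)"
      using dpath.hor[OF "1.IH"(2)] False \<open>i < l\<close> by simp
    have diag: "dpath x y (0, i) (k, l) (nat (?diag + 1))" if "matches x y k l"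
      using dpath.dia[OF "1.IH"(3)] that False \<open>i < l\<close> k max_score_nonneg[of x y i k' "l - 1"]
      by (simp add: nat_add_distrib)
    have "max_score x y i k l = max ?up (max ?left (?diag + of_bool (matches x y k l)))"
      using max_score_Suc[of i "l - 1" x y k'] \<open>i < l\<close> k by simp
    moreover have "?diag \<le> ?up"
      using max_score_mono_col[of x y i k' "l - 1"] by simp
    ultimately consider "max_score x y i k l = ?up" | "max_score x y i k l = ?left"
      | "matches x y k l" "max_score x y i k l = ?diag + 1"
      by (cases "matches x y k l") (auto simp: max_def split: if_splits)
    then show ?thesis
      by cases (use up left diag in simp_all)
  qed
qed

lemma hsm_eq_max_score: "i \<le> j \<Longrightarrow> hsm x y i j = max_score x y i (length x) j"
proof -
  assume "i \<le> j"
  let ?S = "{s. dpath x y (0, i) (length x, j) s}" and ?best = "nat (max_score x y i (length x) j)"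
  have le: "s \<le> ?best" if "s \<in> ?S" for s
    using dpath_score_le_max_score[of x y i _ s] that by fastforce
  then have "finite ?S"
    by (meson atMost_iff finite_atMost finite_subset subsetI)
  moreover have "?best \<in> ?S"
    using dpath_max_score[OF \<open>i \<le> j\<close>] by simp
  ultimately have "Max ?S = ?best"
    using le by (intro Max_eqI)
  then show ?thesis
    using \<open>i \<le> j\<close> max_score_nonneg[of x y i "length x" j] by (simp add: hsm_def)
qed

lemma max_score_cong_matches:
  "(\<And>k' l'. 1 \<le> k' \<Longrightarrow> k' \<le> k \<Longrightarrow> i < l' \<Longrightarrow> l' \<le> l \<Longrightarrow>
      matches x y k' l' = matches x' y' k' l')
   \<Longrightarrow> max_score x y i k l = max_score x' y' i k l"
proof (induction x y i k l rule: max_score.induct)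
  case (1 x y i k l)
  show ?case
  proof (cases "k = 0 \<or> l \<le> i")
    case True
    then show ?thesis by (simp add: max_score_trivial)
  next
    case False
    then show ?thesis
      using "1.IH" "1.prems"
      by (simp add: max_score.simps[of x y i k l] max_score.simps[of x' y' i k l])
  qed
qed

lemma hsm_cong_matches:
  assumes "length x' = length x" "i \<le> j"
    and "\<And>k l. 1 \<le> k \<Longrightarrow> k \<le> length x \<Longrightarrow> i < l \<Longrightarrow> l \<le> j \<Longrightarrow>
      matches x y k l = matches x' y' k l"
  shows "hsm x y i j = hsm x' y' i j"
  using assms max_score_cong_matches[of "length x" i j x y x' y'] by (simp add: hsm_eq_max_score)

lemma max3_diff_between:
  fixes f00 f01 f10 g00 g01 g10 u :: int
  assumes "f00 \<le> f01" "f01 \<le> f00 + 1" "f00 \<le> f10" "f10 \<le> f00 + 1"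
    and "g00 \<le> g01" "g01 \<le> g00 + 1" "g00 \<le> g10" "g10 \<le> g00 + 1"
    and "0 \<le> u" "u \<le> 1"
    and "0 \<le> f01 - g01" "f01 - g01 \<le> f00 - g00" "f00 - g00 \<le> f10 - g10" "f10 - g10 \<le> 1"
  shows "f01 - g01 \<le> max f01 (max f10 (f00 + u)) - max g01 (max g10 (g00 + u)) \<and>
    max f01 (max f10 (f00 + u)) - max g01 (max g10 (g00 + u)) \<le> f10 - g10"
  using assms unfolding max_def by (smt (verit))

definition start_diff :: "'a list \<Rightarrow> 'a list \<Rightarrow> int \<Rightarrow> nat \<Rightarrow> int \<Rightarrow> int" where
  "start_diff x y i k l = max_score x y i k l - max_score x y (i + 1) k l"

lemma start_diff_unit_monge:
  assumes "i + 1 \<le> l"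
  shows "0 \<le> start_diff x y i k l \<and> start_diff x y i k l \<le> 1 \<and>
    (\<forall>k'. k = Suc k' \<longrightarrow> start_diff x y i k' l \<le> start_diff x y i k l) \<and>
    (i + 1 < l \<longrightarrow> start_diff x y i k l \<le> start_diff x y i k (l - 1))"
  using assms
proof (induction k arbitrary: l)
  case 0
  then show ?case by (simp add: start_diff_def max_score_trivial)
next
  case (Suc k)
  from \<open>i + 1 \<le> l\<close> show ?case
  proof (induction l rule: int_ge_induct)
    case base
    have "max_score x y i (Suc k) (i + 1) \<le> 1"
      using max_score_col_step[of x y i "Suc k" i] by (simp add: max_score_trivial)
    then show ?case
      using max_score_mono_row[of x y i k "i + 1"] max_score_nonneg[of x y i k "i + 1"]
      by (simp add: start_diff_def max_score_trivial)
  next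
    case (step l)
    let ?f00 = "max_score x y i k l" and ?f01 = "max_score x y i k (l + 1)"
      and ?f10 = "max_score x y i (Suc k) l"
    let ?g00 = "max_score x y (i + 1) k l" and ?g01 = "max_score x y (i + 1) k (l + 1)"
      and ?g10 = "max_score x y (i + 1) (Suc k) l"
    let ?u = "of_bool (matches x y (Suc k) (l + 1)) :: int"
    have col: "start_diff x y i k (l + 1) \<le> start_diff x y i k l"
      and "0 \<le> start_diff x y i k (l + 1)"
      using Suc.IH[of "l + 1"] step.hyps by auto
    moreover have "start_diff x y i k l \<le> start_diff x y i (Suc k) l"
      and "start_diff x y i (Suc k) l \<le> 1"
      using step.IH by auto
    ultimately have between:
      "?f01 - ?g01 \<le> max ?f01 (max ?f10 (?f00 + ?u)) - max ?g01 (max ?g10 (?g00 + ?u)) \<and>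
        max ?f01 (max ?f10 (?f00 + ?u)) - max ?g01 (max ?g10 (?g00 + ?u)) \<le> ?f10 - ?g10"
      by (intro max3_diff_between max_score_mono_col max_score_col_step max_score_mono_row
          max_score_row_step) (simp_all add: start_diff_def)
    have "max_score x y i (Suc k) (l + 1) = max ?f01 (max ?f10 (?f00 + ?u))"
      and "max_score x y (i + 1) (Suc k) (l + 1) = max ?g01 (max ?g10 (?g00 + ?u))"
      using step.hyps by (simp_all add: max_score_Suc)
    then have "start_diff x y i k (l + 1) \<le> start_diff x y i (Suc k) (l + 1)"
      and "start_diff x y i (Suc k) (l + 1) \<le> start_diff x y i (Suc k) l"
      using between unfolding start_diff_def by simp_all
    then show ?case
      using col \<open>0 \<le> start_diff x y i k (l + 1)\<close> \<open>start_diff x y i (Suc k) l \<le> 1\<close>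
      by auto
  qed
qed

definition critical :: "'a list \<Rightarrow> 'a list \<Rightarrow> int \<Rightarrow> int \<Rightarrow> bool" where
  "critical x y a b \<longleftrightarrow> hsm x y (a + 1) b + 1 = hsm x y a b \<and>
      hsm x y a b = hsm x y (a + 1) (b + 1) \<and> hsm x y (a + 1) (b + 1) = hsm x y a (b + 1)"

lemma mem_crit_iff:
  "(real_of_int a + 1/2, real_of_int b + 1/2) \<in> crit x y \<longleftrightarrow>
    - int (length x) \<le> a \<and> a < int (length y) \<and> 0 \<le> b \<and>
    b < int (length x) + int (length y) \<and> critical x y a b"
  unfolding crit_def critical_def by auto

lemma hsm_crit_recurrence:
  assumes "a \<le> b"
  shows "hsm x y a (b + 1) =
    hsm x y a b + hsm x y (a + 1) (b + 1) - hsm x y (a + 1) b - of_bool (critical x y a b)"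
proof (cases "b = a")
  case True
  have "hsm x y a a = 0" "hsm x y (a + 1) (a + 1) = 0" "hsm x y (a + 1) a = -1"
    by (simp_all add: hsm_eq_max_score max_score_trivial) (simp add: hsm_def)
  moreover have "0 \<le> hsm x y a (a + 1)" "hsm x y a (a + 1) \<le> 1"
    using max_score_nonneg max_score_col_step[of x y a _ a]
    by (auto simp: hsm_eq_max_score max_score_trivial)
  ultimately show ?thesis
    using True by (auto simp: critical_def)
next
  case False
  let ?s = "\<lambda>i j. max_score x y i (length x) j"
  have "a + 1 \<le> b" using assms False by simp
  then have hsm: "hsm x y a (b + 1) = ?s a (b + 1)" "hsm x y a b = ?s a b"
    "hsm x y (a + 1) (b + 1) = ?s (a + 1) (b + 1)" "hsm x y (a + 1) b = ?s (a + 1) b"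
    by (simp_all add: hsm_eq_max_score)
  have "0 \<le> start_diff x y a (length x) b" "start_diff x y a (length x) b \<le> 1"
    "0 \<le> start_diff x y a (length x) (b + 1)"
    "start_diff x y a (length x) (b + 1) \<le> start_diff x y a (length x) b"
    using start_diff_unit_monge[of a b x y "length x"] start_diff_unit_monge[of a "b + 1" x y "length x"]
      \<open>a + 1 \<le> b\<close> by auto
  then show ?thesis
    unfolding critical_def hsm start_diff_def of_bool_def
    using max_score_mono_col[of x y a "length x" b] max_score_mono_col[of x y "a + 1" "length x" b]
      max_score_col_step[of x y a "length x" b] max_score_col_step[of x y "a + 1" "length x" b]
    by (smt (verit))
qed

lemma hsm_eq_if_short_critical_eq:
  assumes len: "length x' = length x" "length y' = length y"
    and crit_eq: "\<And>a b. - int (length x) \<le> a \<Longrightarrow> a < int (length y) \<Longrightarrow> 0 \<le> b \<Longrightarrow>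
      b < int (length x) + int (length y) \<Longrightarrow> b - a < w \<Longrightarrow> critical x y a b = critical x' y' a b"
    and range: "- int (length x) \<le> i" "i \<le> int (length y)"
      "0 \<le> j" "j \<le> int (length x) + int (length y)" "j - i \<le> w"
  shows "hsm x y i j = hsm x' y' i j"
  using range
proof (induction "nat (j - i)" arbitrary: i j rule: less_induct)
  case less
  consider "j < i" | "j = i" | "i < j" "i = int (length y) \<or> j = 0"
    | "i < j" "i < int (length y)" "0 < j"
    using less.prems by linarith
  then show ?case
  proof cases
    case 1
    then show ?thesis by (simp add: hsm_def)
  next
    case 2
    then show ?thesis using len by (intro hsm_cong_matches) auto
  next
    case 3
    then show ?thesis using len by (intro hsm_cong_matches) (auto simp: matches_def)
  next
    case 4
    have "hsm x y i (j - 1) = hsm x' y' i (j - 1)" "hsm x y (i + 1) j = hsm x' y' (i + 1) j"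
      using less.hyps less.prems 4 by auto
    moreover have "hsm x y (i + 1) (j - 1) = hsm x' y' (i + 1) (j - 1)"
    proof (cases "j - 1 < i + 1")
      case True
      then show ?thesis by (simp add: hsm_def)
    next
      case False
      then show ?thesis using less.hyps less.prems 4 by auto
    qed
    moreover have "critical x y i (j - 1) = critical x' y' i (j - 1)"
      using crit_eq less.prems 4 by auto
    ultimately show ?thesis
      using hsm_crit_recurrence[of i "j - 1" x y] hsm_crit_recurrence[of i "j - 1" x' y'] 4
      by simp
  qed
qed

lemma critical_eq_if_short_crit_eq:
  assumes "length x' = length x" "length y' = length y"
    and "{(ih, jh) \<in> crit x y. jh - ih < of_int w} = {(ih, jh) \<in> crit x' y'. jh - ih < of_int w}"
    and "- int (length x) \<le> a" "a < int (length y)" "0 \<le> b"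
      "b < int (length x) + int (length y)" "b - a < w"
  shows "critical x y a b = critical x' y' a b"
proof -
  let ?p = "(real_of_int a + 1/2, real_of_int b + 1/2)"
  have "snd ?p - fst ?p < of_int w" using \<open>b - a < w\<close> by simp
  then have "?p \<in> crit x y \<longleftrightarrow> ?p \<in> crit x' y'"
    using assms(3) by (metis (mono_tags, lifting) case_prod_conv mem_Collect_eq prod.collapse)
  then show ?thesis using assms by (simp add: mem_crit_iff)
qed

theorem proposition1:
  fixes x y x' y' :: "'a list" and w r :: int
  assumes "w > 0" and "r > 0"
    and "length x' = length x" and "length y' = length y"
    and "{(ih, jh) \<in> crit x y. jh - ih < of_int w} = {(ih, jh) \<in> crit x' y'. jh - ih < of_int w}"
  shows "\<forall>i j. hsm_restr x y w r i j \<noteq> None \<longrightarrow> hsm_restr x y w r i j = hsm_restr x' y' w r i j"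
proof (intro allI impI)
  fix i j
  assume "hsm_restr x y w r i j \<noteq> None"
  then have "- int (length x) \<le> i" "i \<le> int (length y)"
    "0 \<le> j" "j \<le> int (length x) + int (length y)" "j - i \<le> w"
    by (auto simp: hsm_restr_def split: if_splits)
  then have "hsm x y i j = hsm x' y' i j"
    using hsm_eq_if_short_critical_eq[OF assms(3,4) critical_eq_if_short_crit_eq[OF assms(3-5)]]
    by blast
  then show "hsm_restr x y w r i j = hsm_restr x' y' w r i j"
    using assms(3,4) by (simp add: hsm_restr_def)
qed

end
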